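(* Let $k\geq 0$. Then \[ H_k(x)=\sum_{i=0}^{k+1}\sum_{j=0}^{2k+1}h_k(i,j)\,x^{2(k+1)i+j}, \] where $h_k(i,j)=t_k(k+1-i,\,k-j)$ for $0\leq i\leq k+1$, $0\leq j\leq k$, and $h_k(i,j)=t_k(i,\,j-k-1)$ for $0\leq i\leq k+1$, $k+1\leq j\leq 2k+1$. (That is, the $(k+2)\times 2(k+1)$ coefficient array of $H_k$ is obtained from the $(k+2)\times(k+1)$ array $t_k$ by placing a $180^\circ$ rotation of $t_k$ in front of $t_k$.)
   Context: $B_n(y)=\sum_{\pi\in B_n}y^{\mathrm{des}_B(\pi)}$ is the type $B$ Eulerian polynomial: $B_n$ is the set of signed permutations $\pi_1\cdots\pi_n$ of $[n]$, and with $\pi_0=0$, $\mathrm{des}_B(\pi)$ counts $i\in\{0,\dots,n-1\}$ with $\pi_i>\pi_{i+1}$; $B_0=1$. Define \[\widetilde T_k(x)=\sum_{l=0}^{k}B_{k-l}(x^{k+1})(x^{k+1}-1)^l\sum_{i=l}^{k}\binom{i}{l}x^{k-i},\] and for $0\le i\le k+1$, $0\le j\le k$ let $t_k(i,j)$ be the coefficient of $x^{(k+1)i+j}$ in $\widetilde T_k(x)$. Define \[H_k(x)=\sum_{l=0}^{k}B_{k-l}(x^{2k+2})(x^{2k+2}-1)^l\sum_{s=l}^{k}\binom{s}{l}x^{2k+1-s}+\sum_{l=0}^{k}B_{k-l}(x^{-2k-2})(x^{-2k-2}-1)^l\sum_{s=l}^{k}\binom{s}{l}x^{2(k+1)^2+s}.\]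 *)

theory Defs
  imports "HOL-Computational_Algebra.Polynomial"
begin

text \<open>Signed permutations of [n], encoded as functions nat => int with
  pi 0 = 0 (the convention pi_0 = 0), pi i = 0 for i > n, and i |-> |pi i|
  a bijection of {1..n}.\<close>
definition signed_perms :: "nat \<Rightarrow> (nat \<Rightarrow> int) set" where
  "signed_perms n = {\<pi>. (\<forall>i. i \<notin> {1..n} \<longrightarrow> \<pi> i = 0)
      \<and> bij_betw (\<lambda>i. nat \<bar>\<pi> i\<bar>) {1..n} {1..n}}"

definition desB :: "nat \<Rightarrow> (nat \<Rightarrow> int) \<Rightarrow> nat" where
  "desB n \<pi> = card {i \<in> {0..<n}. \<pi> i > \<pi> (Suc i)}"

definition Bpoly :: "nat \<Rightarrow> 'a::comm_ring_1 poly" where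
  "Bpoly n = (\<Sum>\<pi>\<in>signed_perms n. monom 1 (desB n \<pi>))"

definition Ttilde :: "nat \<Rightarrow> int poly" where
  "Ttilde k = (\<Sum>l=0..k. pcompose (Bpoly (k - l)) (monom 1 (k+1))
      * (monom 1 (k+1) - 1) ^ l
      * (\<Sum>i=l..k. of_nat (i choose l) * monom 1 (k - i)))"

definition tcoef :: "nat \<Rightarrow> nat \<Rightarrow> nat \<Rightarrow> int" where
  "tcoef k i j = coeff (Ttilde k) ((k+1)*i + j)"

definition hcoef :: "nat \<Rightarrow> nat \<Rightarrow> nat \<Rightarrow> int" where
  "hcoef k i j = (if j \<le> k then tcoef k (k+1-i) (k-j) else tcoef k i (j-k-1))"

definition Hk :: "nat \<Rightarrow> 'a::field \<Rightarrow> 'a" where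
  "Hk k x =
     (\<Sum>l=0..k. poly (Bpoly (k-l)) (x^(2*k+2)) * (x^(2*k+2) - 1)^l
        * (\<Sum>s=l..k. of_nat (s choose l) * x^(2*k+1-s)))
   + (\<Sum>l=0..k. poly (Bpoly (k-l)) (inverse (x^(2*k+2))) * (inverse (x^(2*k+2)) - 1)^l
        * (\<Sum>s=l..k. of_nat (s choose l) * x^(2*(k+1)^2+s)))"

end

theory Submission
  imports Defs
begin

text \<open>Let R_{k,s}(y) = \<Sum>_l B_{k-l}(y) (y - 1)^l (s choose l), a polynomial of degree at most k.
  Exchanging the two sums in the definition of T_k gives T_k(x) = \<Sum>_s x^{k-s} R_{k,s}(x^{k+1}),
  so by uniqueness of division with remainder t_k(a, j) is the a-th coefficient of R_{k,k-j}.
  The same exchange writes the first half of H_k as \<Sum>_s x^{2k+1-s} R_{k,s}(x^{2k+2}), which is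
  the array t_k shifted right by k + 1, and the second half as
  \<Sum>_s x^{2(k+1)^2+s} R_{k,s}(x^{-2k-2}): passing to the reciprocal polynomial reverses the
  coefficients of each R_{k,s}, which together with the reversed order of s is the
  180 degree rotation of t_k.\<close>

lemma desB_le: "desB n \<pi> \<le> n"
proof -
  have "desB n \<pi> \<le> card {0..<n}" unfolding desB_def by (rule card_mono) auto
  thus ?thesis by simp
qed

lemma degree_Bpoly_le: "degree (Bpoly n :: 'a::comm_ring_1 poly) \<le> n"
proof (cases "finite (signed_perms n)")
  case True
  show ?thesis unfolding Bpoly_def
    by (rule degree_sum_le[OF True]) (rule order_trans[OF degree_monom_le desB_le])
qed (simp add: Bpoly_def)

definition Rpoly :: "nat \<Rightarrow> nat \<Rightarrow> 'a::comm_ring_1 poly" where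
  "Rpoly k s = (\<Sum>l=0..k. Bpoly (k-l) * [:-1, 1:]^l * of_nat (s choose l))"

lemma degree_Rpoly_le: "degree (Rpoly k s :: 'a::comm_ring_1 poly) \<le> k"
  unfolding Rpoly_def
proof (rule degree_sum_le[OF finite_atLeastAtMost])
  fix l assume l: "l \<in> {0..k}"
  have "degree (Bpoly (k-l) * [:-1, 1:]^l * (of_nat (s choose l) :: 'a poly))
      \<le> degree (Bpoly (k-l) :: 'a poly) + degree ([:-1, 1:]^l :: 'a poly)
         + degree (of_nat (s choose l) :: 'a poly)"
    by (meson add_le_mono degree_mult_le order.trans order_refl)
  also have "\<dots> \<le> (k-l) + l + 0"
    by (intro add_mono degree_Bpoly_le)
       (auto simp: of_nat_poly intro: order.trans[OF degree_power_le])
  finally show "degree (Bpoly (k-l) * [:-1, 1:]^l * (of_nat (s choose l) :: 'a poly)) \<le> k"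
    using l by simp
qed

lemma poly_Bpoly_binomial_sum:
  "(\<Sum>l=0..k. poly (Bpoly (k-l)) y * (y - 1)^l * (\<Sum>i=l..k. of_nat (i choose l) * f i))
   = (\<Sum>i=0..k. f i * poly (Rpoly k i) (y :: 'a::comm_ring_1))"
proof -
  have "(\<Sum>i=l..k. of_nat (i choose l) * f i) = (\<Sum>i=0..k. of_nat (i choose l) * f i)" for l
    by (rule sum.mono_neutral_left) (auto simp: binomial_eq_0)
  hence "(\<Sum>l=0..k. poly (Bpoly (k-l)) y * (y - 1)^l * (\<Sum>i=l..k. of_nat (i choose l) * f i))
      = (\<Sum>l=0..k. \<Sum>i=0..k. f i * (poly (Bpoly (k-l)) y * (y - 1)^l * of_nat (i choose l)))"
    by (simp add: sum_distrib_left mult_ac)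
  also have "\<dots> = (\<Sum>i=0..k. f i * (\<Sum>l=0..k. poly (Bpoly (k-l)) y * (y - 1)^l * of_nat (i choose l)))"
    by (subst sum.swap) (simp add: sum_distrib_left)
  finally show ?thesis by (simp add: Rpoly_def poly_sum)
qed

lemma map_poly_of_int_add:
  "map_poly of_int (p + q) = (map_poly of_int p + map_poly of_int q :: 'a::comm_ring_1 poly)"
  by (rule poly_eqI) (simp add: coeff_map_poly)

lemma map_poly_of_int_mult:
  "map_poly of_int (p * q) = (map_poly of_int p * map_poly of_int q :: 'a::comm_ring_1 poly)"
  by (rule poly_eqI) (simp add: coeff_map_poly coeff_mult)

lemma map_poly_of_int_power:
  "map_poly of_int (p ^ n) = (map_poly of_int p ^ n :: 'a::comm_ring_1 poly)"
  by (induction n) (simp_all add: map_poly_of_int_mult)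

lemma map_poly_of_int_sum:
  "map_poly of_int (\<Sum>x\<in>A. f x) = (\<Sum>x\<in>A. map_poly of_int (f x) :: 'a::comm_ring_1 poly)"
  by (induction A rule: infinite_finite_induct) (simp_all add: map_poly_of_int_add)

lemma of_int_coeff_Rpoly:
  "of_int (coeff (Rpoly k s) a) = (coeff (Rpoly k s) a :: 'a::comm_ring_1)"
proof -
  have Bpoly: "map_poly of_int (Bpoly n) = (Bpoly n :: 'a poly)" for n
    by (simp add: Bpoly_def map_poly_of_int_sum map_poly_monom)
  have "map_poly of_int (Rpoly k s) = (Rpoly k s :: 'a poly)"
    unfolding Rpoly_def map_poly_of_int_sum map_poly_of_int_mult map_poly_of_int_power Bpoly
    by (simp add: of_nat_poly map_poly_pCons)
  thus ?thesis by (metis coeff_map_poly of_int_0)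
qed

lemma poly_eq_sum_coeff:
  fixes p :: "'a::comm_semiring_1 poly"
  assumes "degree p \<le> d" shows "poly p x = (\<Sum>a\<le>d. coeff p a * x^a)"
proof -
  have "poly p x = poly (\<Sum>a\<le>d. monom (coeff p a) a) x"
    by (simp only: poly_as_sum_of_monoms'[OF assms])
  also have "\<dots> = (\<Sum>a\<le>d. coeff p a * x^a)"
    by (simp add: poly_sum poly_monom)
  finally show ?thesis .
qed

lemma power_mult_poly_power:
  fixes x :: "'a::comm_ring_1"
  assumes "degree p \<le> d"
  shows "x^j * poly p (x^m) = (\<Sum>a\<le>d. coeff p a * x^(m*a + j))"
  unfolding poly_eq_sum_coeff[OF assms] sum_distrib_left
proof (rule sum.cong[OF refl])
  fix a
  have "x^(m*a + j) = x^j * (x^m)^a" by (simp add: power_add power_mult)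
  thus "x^j * (coeff p a * (x^m)^a) = coeff p a * x^(m*a + j)" by (simp add: mult_ac)
qed

lemma power_mult_poly_inverse_power:
  fixes x :: "'a::field"
  assumes "x \<noteq> 0" and "degree p \<le> d"
  shows "x^(m*d + j) * poly p (inverse (x^m)) = (\<Sum>a\<le>d. coeff p a * x^(m*(d-a) + j))"
  unfolding poly_eq_sum_coeff[OF assms(2)] sum_distrib_left
proof (rule sum.cong[OF refl])
  fix a assume "a \<in> {..d}"
  hence "m*d = m*(d-a) + m*a" by (simp add: add_mult_distrib2[symmetric])
  hence "m*d + j = (m*(d-a) + j) + m*a" by simp
  hence "x^(m*d + j) = x^(m*(d-a) + j) * (x^m)^a"
    by (simp only: power_add power_mult)
  moreover have "(x^m)^a * inverse (x^m)^a = 1"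
    using assms(1) by (metis power_mult_distrib right_inverse power_one power_not_zero)
  ultimately show "x^(m*d + j) * (coeff p a * inverse (x^m)^a) = coeff p a * x^(m*(d-a) + j)"
    by (metis (no_types, lifting) mult.assoc mult.commute mult.right_neutral)
qed

lemma coeff_sum_monom_mixed_radix:
  assumes "j < m"
  shows "coeff (\<Sum>i<m. \<Sum>a<e. monom (c i a) (m*a + i)) (m*b + j) = (if b < e then c j b else 0)"
proof -
  have digits_eq: "m*a + i = m*b + j \<longleftrightarrow> a = b \<and> i = j" if "i < m" for a i
  proof
    assume eq: "m*a + i = m*b + j"
    have "i = (m*a + i) mod m" using that by simp
    also have "\<dots> = j" using eq assms by simp
    finally show "a = b \<and> i = j" using eq assms by simp
  qed simp
  have "coeff (\<Sum>i<m. \<Sum>a<e. monom (c i a) (m*a + i)) (m*b + j)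
      = (\<Sum>i<m. \<Sum>a<e. if m*a + i = m*b + j then c i a else 0)"
    by (simp add: coeff_sum coeff_monom)
  also have "\<dots> = (\<Sum>i<m. if i = j then (\<Sum>a<e. if a = b then c j a else 0) else 0)"
    by (intro sum.cong refl) (auto simp: digits_eq)
  also have "\<dots> = (if b < e then c j b else 0)"
    using assms by simp
  finally show ?thesis .
qed

lemma sum_atLeast0AtMost_reflect:
  fixes g :: "nat \<Rightarrow> 'a::comm_monoid_add"
  shows "(\<Sum>i=0..k. g i) = (\<Sum>j\<le>k. g (k-j))"
  using sum.nat_diff_reindex[of g "Suc k"] by (simp add: atLeast0AtMost lessThan_Suc_atMost)

lemma Ttilde_eq_sum_monom:
  "Ttilde k = (\<Sum>j\<le>k. \<Sum>a\<le>k. monom (coeff (Rpoly k (k-j)) a) ((k+1)*a + j))"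
proof -
  have "poly (Ttilde k) x
      = poly (\<Sum>j\<le>k. \<Sum>a\<le>k. monom (coeff (Rpoly k (k-j)) a) ((k+1)*a + j)) x" for x :: int
  proof -
    have "poly (Ttilde k) x = (\<Sum>l=0..k. poly (Bpoly (k-l)) (x^(k+1)) * (x^(k+1) - 1)^l
        * (\<Sum>i=l..k. of_nat (i choose l) * x^(k-i)))"
      by (simp add: Ttilde_def poly_sum poly_pcompose poly_monom mult.assoc)
    also have "\<dots> = (\<Sum>i=0..k. x^(k-i) * poly (Rpoly k i) (x^(k+1)))"
      by (rule poly_Bpoly_binomial_sum)
    also have "\<dots> = (\<Sum>i=0..k. \<Sum>a\<le>k. coeff (Rpoly k i) a * x^((k+1)*a + (k-i)))"
      by (intro sum.cong refl power_mult_poly_power degree_Rpoly_le)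
    also have "\<dots> = (\<Sum>j\<le>k. \<Sum>a\<le>k. coeff (Rpoly k (k-j)) a * x^((k+1)*a + j))"
      by (subst sum_atLeast0AtMost_reflect) (intro sum.cong refl; simp)
    finally show ?thesis by (simp add: poly_sum poly_monom)
  qed
  thus ?thesis by (intro poly_eq_poly_eq_iff[THEN iffD1] ext)
qed

lemma tcoef_eq_coeff_Rpoly:
  assumes "j \<le> k" shows "tcoef k a j = coeff (Rpoly k (k-j)) a"
proof -
  have "tcoef k a j = (if a < k+1 then coeff (Rpoly k (k-j)) a else 0)"
    unfolding tcoef_def Ttilde_eq_sum_monom lessThan_Suc_atMost[symmetric] Suc_eq_plus1
    by (rule coeff_sum_monom_mixed_radix[where c = "\<lambda>j. coeff (Rpoly k (k-j))"]) (use assms in simp)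
  thus ?thesis using degree_Rpoly_le[of k "k-j", where 'a = int] by (auto intro!: coeff_eq_0)
qed

lemma Hk_eq_sum_coeff_Rpoly:
  fixes x :: "'a::field"
  assumes "x \<noteq> 0"
  shows "Hk k x = (\<Sum>s=0..k. \<Sum>a\<le>k+1. coeff (Rpoly k s) a * x^(2*(k+1)*a + (2*k+1-s)))
                + (\<Sum>s=0..k. \<Sum>a\<le>k+1. coeff (Rpoly k s) a * x^(2*(k+1)*(k+1-a) + s))"
    (is "_ = ?rhs")
proof -
  have deg: "degree (Rpoly k s :: 'a poly) \<le> k+1" for s
    by (simp add: le_SucI degree_Rpoly_le)
  have "Hk k x = (\<Sum>s=0..k. x^(2*k+1-s) * poly (Rpoly k s) (x^(2*(k+1))))
      + (\<Sum>s=0..k. x^(2*(k+1)*(k+1)+s) * poly (Rpoly k s) (inverse (x^(2*(k+1)))))"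
  proof -
    have "2*k + 2 = 2*(k+1)" "2*(k+1)^2 = 2*(k+1)*(k+1)" by (simp_all add: power2_eq_square)
    thus ?thesis unfolding Hk_def poly_Bpoly_binomial_sum by (simp only:)
  qed
  also have "\<dots> = ?rhs"
    by (intro arg_cong2[where f = "(+)"] sum.cong refl
        power_mult_poly_power power_mult_poly_inverse_power assms deg)
  finally show ?thesis .
qed

lemma sum_hcoef_eq_sum_coeff_Rpoly:
  "(\<Sum>i=0..k+1. \<Sum>j=0..2*k+1. of_int (hcoef k i j) * x^(2*(k+1)*i + j))
   = (\<Sum>s=0..k. \<Sum>a\<le>k+1. coeff (Rpoly k s) a * x^(2*(k+1)*(k+1-a) + s))
   + (\<Sum>s=0..k. \<Sum>a\<le>k+1. coeff (Rpoly k s) a * (x :: 'a::comm_ring_1)^(2*(k+1)*a + (2*k+1-s)))"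
proof -
  have rotated: "(\<Sum>i=0..k+1. \<Sum>j=0..k. of_int (hcoef k i j) * x^(2*(k+1)*i + j))
      = (\<Sum>s=0..k. \<Sum>a\<le>k+1. coeff (Rpoly k s) a * x^(2*(k+1)*(k+1-a) + s))"
  proof -
    have "(\<Sum>i=0..k+1. \<Sum>j=0..k. of_int (hcoef k i j) * x^(2*(k+1)*i + j))
        = (\<Sum>i=0..k+1. \<Sum>j=0..k. coeff (Rpoly k j) (k+1-i) * x^(2*(k+1)*i + j))"
      by (intro sum.cong refl) (simp add: hcoef_def tcoef_eq_coeff_Rpoly of_int_coeff_Rpoly)
    also have "\<dots> = (\<Sum>j=0..k. \<Sum>a\<le>k+1. coeff (Rpoly k j) (k+1-(k+1-a)) * x^(2*(k+1)*(k+1-a) + j))"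
      by (subst sum.swap) (intro sum.cong refl sum_atLeast0AtMost_reflect)
    also have "\<dots> = (\<Sum>s=0..k. \<Sum>a\<le>k+1. coeff (Rpoly k s) a * x^(2*(k+1)*(k+1-a) + s))"
      by (intro sum.cong refl) simp
    finally show ?thesis .
  qed
  have shifted: "(\<Sum>i=0..k+1. \<Sum>j=0..k. of_int (hcoef k i (k+1+j)) * x^(2*(k+1)*i + (k+1+j)))
      = (\<Sum>s=0..k. \<Sum>a\<le>k+1. coeff (Rpoly k s) a * x^(2*(k+1)*a + (2*k+1-s)))"
  proof -
    have "(\<Sum>i=0..k+1. \<Sum>j=0..k. of_int (hcoef k i (k+1+j)) * x^(2*(k+1)*i + (k+1+j)))
        = (\<Sum>i=0..k+1. \<Sum>j=0..k. coeff (Rpoly k (k-j)) i * x^(2*(k+1)*i + (k+1+j)))"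
      by (intro sum.cong refl) (simp add: hcoef_def tcoef_eq_coeff_Rpoly of_int_coeff_Rpoly)
    also have "\<dots> = (\<Sum>j\<le>k. \<Sum>i\<le>k+1. coeff (Rpoly k (k-j)) i * x^(2*(k+1)*i + (k+1+j)))"
      by (subst sum.swap) (simp add: atLeast0AtMost)
    also have "\<dots> = (\<Sum>s=0..k. \<Sum>a\<le>k+1. coeff (Rpoly k s) a * x^(2*(k+1)*a + (2*k+1-s)))"
      by (subst sum_atLeast0AtMost_reflect) (intro sum.cong refl; simp)
    finally show ?thesis .
  qed
  have split: "(\<Sum>j=0..2*k+1. g j) = (\<Sum>j=0..k. g j) + (\<Sum>j=0..k. g (k+1+j))"
    for g :: "nat \<Rightarrow> 'a"
  proof -
    have "{0..2*k+1} = {0..k} \<union> {k+1..2*k+1}" by auto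
    hence "(\<Sum>j=0..2*k+1. g j) = (\<Sum>j=0..k. g j) + (\<Sum>j=k+1..2*k+1. g j)"
      by (simp add: sum.union_disjoint)
    also have "(\<Sum>j=k+1..2*k+1. g j) = (\<Sum>j=0..k. g (k+1+j))"
      by (subst sum.atLeastAtMost_shift_0) (auto simp: comp_def)
    finally show ?thesis .
  qed
  have "(\<Sum>i=0..k+1. \<Sum>j=0..2*k+1. of_int (hcoef k i j) * x^(2*(k+1)*i + j))
      = (\<Sum>i=0..k+1. \<Sum>j=0..k. of_int (hcoef k i j) * x^(2*(k+1)*i + j))
      + (\<Sum>i=0..k+1. \<Sum>j=0..k. of_int (hcoef k i (k+1+j)) * x^(2*(k+1)*i + (k+1+j)))"
    by (simp only: split sum.distrib)
  thus ?thesis by (simp only: rotated shifted)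
qed

theorem lemma3p1:
  fixes k :: nat and x :: "'a::field"
  assumes "x \<noteq> 0"
  shows "Hk k x = (\<Sum>i=0..k+1. \<Sum>j=0..2*k+1. of_int (hcoef k i j) * x^(2*(k+1)*i + j))"
  unfolding Hk_eq_sum_coeff_Rpoly[OF assms] sum_hcoef_eq_sum_coeff_Rpoly by (rule add.commute)

end
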